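(* Let $K=\mathbb{F}_3$ and $S$ a smooth cubic surface over $K$. Suppose $S$ contains a skew pair of $K$-lines $\ell_1,\ell_2$ such that neither $\ell_1$ nor $\ell_2$ contains a $K$-rational Eckardt point. Then $\mathrm{Span}(\ell_1(K)\cup\ell_2(K))=S(K)$.
   Context: A smooth cubic surface $S$ over $K$ is a nonsingular surface in $\mathbb{P}^3$ defined by a homogeneous cubic over $K$. A $K$-line is a line in $\mathbb{P}^3$ defined over $K$; lines "on $S$" are lines over $\overline{K}$ contained in $S$. A skew pair of lines is a pair of disjoint lines. An Eckardt point is a point of $S$ through which three of the lines on $S$ pass. For a line $\ell\not\subset S$, $\ell\cdot S=P+Q+R$ with multiplicity. For $B\subseteq S(K)$ define $B_0=B$ and $B_{n+1}$ as the set of $R\in S(K)$ such that either $R\in B_n$ or there exist $P,Q\in B_n$ and a $K$-line $\ell\not\subset S$ with $\ell\cdot S=P+Q+R$; $\mathrm{Span}(B)=\bigcup_n B_n$. *)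

theory Defs
  imports "HOL-Algebra.Algebraic_Closure_Type" "HOL-Library.Numeral_Type"
begin

text \<open>Homogeneous coordinates on P^3 are indexed by the 4-element type 4.
A homogeneous cubic form in 4 variables is given by its coefficient function
on exponent vectors; only exponent vectors of total degree 3 are used.\<close>

definition mons3 :: "(4 \<Rightarrow> nat) set" where
  "mons3 = {e. (\<Sum>i\<in>UNIV. e i) = 3}"

definition evalF :: "((4 \<Rightarrow> nat) \<Rightarrow> 'a::comm_ring_1) \<Rightarrow> (4 \<Rightarrow> 'a) \<Rightarrow> 'a" where
  "evalF c x = (\<Sum>e\<in>mons3. c e * (\<Prod>i\<in>UNIV. x i ^ e i))"

definition pdF :: "((4 \<Rightarrow> nat) \<Rightarrow> 'a::comm_ring_1) \<Rightarrow> 4 \<Rightarrow> (4 \<Rightarrow> 'a) \<Rightarrow> 'a" where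
  "pdF c j x = (\<Sum>e\<in>mons3. c e * of_nat (e j) * x j ^ (e j - 1)
                   * (\<Prod>i\<in>UNIV - {j}. x i ^ e i))"

definition ext_coeffs :: "((4 \<Rightarrow> nat) \<Rightarrow> 'k::field) \<Rightarrow> (4 \<Rightarrow> nat) \<Rightarrow> 'k alg_closure" where
  "ext_coeffs c = (\<lambda>e. to_ac (c e))"

definition ext_vec :: "(4 \<Rightarrow> 'k::field) \<Rightarrow> 4 \<Rightarrow> 'k alg_closure" where
  "ext_vec x = (\<lambda>i. to_ac (x i))"

definition smooth_cubic :: "((4 \<Rightarrow> nat) \<Rightarrow> 'k::field) \<Rightarrow> bool" where
  "smooth_cubic c \<longleftrightarrow>
     (\<forall>x :: 4 \<Rightarrow> 'k alg_closure. x \<noteq> (\<lambda>_. 0) \<and> evalF (ext_coeffs c) x = 0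
        \<longrightarrow> (\<exists>j. pdF (ext_coeffs c) j x \<noteq> 0))"

definition ppt :: "(4 \<Rightarrow> 'a::field) \<Rightarrow> (4 \<Rightarrow> 'a) set" where
  "ppt x = {(\<lambda>i. a * x i) | a. a \<noteq> 0}"

definition surf_pts :: "((4 \<Rightarrow> nat) \<Rightarrow> 'a::field) \<Rightarrow> (4 \<Rightarrow> 'a) set set" where
  "surf_pts c = {ppt x | x. x \<noteq> (\<lambda>_. 0) \<and> evalF c x = 0}"

definition lincomb :: "'a::field \<Rightarrow> (4 \<Rightarrow> 'a) \<Rightarrow> 'a \<Rightarrow> (4 \<Rightarrow> 'a) \<Rightarrow> 4 \<Rightarrow> 'a" where
  "lincomb s u t v = (\<lambda>i. s * u i + t * v i)"

definition indep2 :: "(4 \<Rightarrow> 'a::field) \<Rightarrow> (4 \<Rightarrow> 'a) \<Rightarrow> bool" where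
  "indep2 u v \<longleftrightarrow> (\<forall>s t. lincomb s u t v = (\<lambda>_. 0) \<longrightarrow> s = 0 \<and> t = 0)"

definition line_pts :: "(4 \<Rightarrow> 'a::field) \<Rightarrow> (4 \<Rightarrow> 'a) \<Rightarrow> (4 \<Rightarrow> 'a) set set" where
  "line_pts u v = {ppt (lincomb s u t v) | s t. (s, t) \<noteq> (0, 0)}"

definition is_line :: "(4 \<Rightarrow> 'a::field) set set \<Rightarrow> bool" where
  "is_line L \<longleftrightarrow> (\<exists>u v. indep2 u v \<and> L = line_pts u v)"

definition line_on_surface :: "((4 \<Rightarrow> nat) \<Rightarrow> 'a::field) \<Rightarrow> (4 \<Rightarrow> 'a) set set \<Rightarrow> bool" where
  "line_on_surface c L \<longleftrightarrow> is_line L \<and> L \<subseteq> surf_pts c"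

definition eckardt :: "((4 \<Rightarrow> nat) \<Rightarrow> 'a::field) \<Rightarrow> (4 \<Rightarrow> 'a) set \<Rightarrow> bool" where
  "eckardt c P \<longleftrightarrow> P \<in> surf_pts c \<and>
     (\<exists>L1 L2 L3. L1 \<noteq> L2 \<and> L1 \<noteq> L3 \<and> L2 \<noteq> L3 \<and>
        line_on_surface c L1 \<and> line_on_surface c L2 \<and> line_on_surface c L3 \<and>
        P \<in> L1 \<and> P \<in> L2 \<and> P \<in> L3)"

definition Kline_on_surface :: "((4 \<Rightarrow> nat) \<Rightarrow> 'k::field) \<Rightarrow> (4 \<Rightarrow> 'k) \<Rightarrow> (4 \<Rightarrow> 'k) \<Rightarrow> bool" where
  "Kline_on_surface c u v \<longleftrightarrow> indep2 u v \<and>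
     line_pts (ext_vec u) (ext_vec v) \<subseteq> surf_pts (ext_coeffs c)"

definition Kline_has_K_eckardt :: "((4 \<Rightarrow> nat) \<Rightarrow> 'k::field) \<Rightarrow> (4 \<Rightarrow> 'k) \<Rightarrow> (4 \<Rightarrow> 'k) \<Rightarrow> bool" where
  "Kline_has_K_eckardt c u v \<longleftrightarrow>
     (\<exists>p. ppt p \<in> line_pts u v \<and> eckardt (ext_coeffs c) (ppt (ext_vec p)))"

text \<open>There is a K-line l, not contained in S, with l.S = P + Q + R (with multiplicity):
writing l = span(u,v) and the points as P = [a1 u + b1 v] etc., the restriction of the
cubic to l, as a binary cubic form, is a nonzero constant times the product of the three
linear forms vanishing at P, Q, R.\<close>
definition third_pt :: "((4 \<Rightarrow> nat) \<Rightarrow> 'k::field) \<Rightarrow> (4 \<Rightarrow> 'k) set \<Rightarrow> (4 \<Rightarrow> 'k) set \<Rightarrow> (4 \<Rightarrow> 'k) set \<Rightarrow> bool" where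
  "third_pt c P Q R \<longleftrightarrow>
     (\<exists>u v a1 b1 a2 b2 a3 b3 lam.
        indep2 u v \<and>
        \<not> (line_pts (ext_vec u) (ext_vec v) \<subseteq> surf_pts (ext_coeffs c)) \<and>
        (a1, b1) \<noteq> (0, 0) \<and> (a2, b2) \<noteq> (0, 0) \<and> (a3, b3) \<noteq> (0, 0) \<and>
        P = ppt (lincomb a1 u b1 v) \<and> Q = ppt (lincomb a2 u b2 v) \<and> R = ppt (lincomb a3 u b3 v) \<and>
        lam \<noteq> 0 \<and>
        (\<forall>s t :: 'k alg_closure.
           evalF (ext_coeffs c) (lincomb s (ext_vec u) t (ext_vec v)) =
             to_ac lam * (to_ac b1 * s - to_ac a1 * t) * (to_ac b2 * s - to_ac a2 * t)
               * (to_ac b3 * s - to_ac a3 * t)))"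

text \<open>Span(B) as the union of the B_n: the least set containing B and closed under
adding third points R in S(K) of K-lines through two of its points.\<close>
inductive_set spanS :: "((4 \<Rightarrow> nat) \<Rightarrow> 'k::field) \<Rightarrow> (4 \<Rightarrow> 'k) set set \<Rightarrow> (4 \<Rightarrow> 'k) set set"
  for c B where
  base: "R \<in> B \<Longrightarrow> R \<in> spanS c B"
| step: "P \<in> spanS c B \<Longrightarrow> Q \<in> spanS c B \<Longrightarrow> R \<in> surf_pts c \<Longrightarrow> third_pt c P Q R
          \<Longrightarrow> R \<in> spanS c B"

end

theory Submission
  imports Defs "HOL-Library.Cardinality"
begin

text \<open>
  Let l1, l2 be the skew K-lines, spanned by u1, v1 and u2, v2. Since they are
  skew, u1, v1, u2, v2 is a basis of K^4, so every point of S(K) off l1 and l2 is [x + y]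
  with x \<in> l1, y \<in> l2 (nonzero K-vectors). Restricted to the line xy, the cubic F is the
  binary form s t (k s + polar(x, y) t), since F(x) = F(y) = 0.

  Easy case: the line xy is not on S. Then F(x + y) = 0 forces the form to be k s t (s - t),
  and [x + y] is the third point of the line through [x] and [y].

  Hard case: the line xy lies on S. By smoothness the tangent form polar(-, x + y) is nonzero
  on l1 or l2, say on l1. Pick x' \<in> l1, not proportional to x, with polar(x', x + y) \<noteq> 0.
  The line through x' and x + y is not on S; its third point w is either [x'] or of the form
  [x'' + y] with x'' \<in> l1, and the secant x'' y cannot lie on S, since otherwise [y] would lie
  on three lines of S (xy, x''y and l2): a K-rational Eckardt point on l2. So w is in the span
  by the easy case, and then so is [x + y] as third point of the line through [x'] and w.

  The argument
  works over every finite field.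
\<close>

section \<open>Cubic forms and their restriction to lines\<close>

lemma evalF_scale: "evalF c (\<lambda>i. a * x i) = a ^ 3 * evalF c x"
proof -
  have "(\<Prod>i\<in>UNIV. (a * x i) ^ e i) = a ^ 3 * (\<Prod>i\<in>UNIV. x i ^ e i)" if "e \<in> mons3" for e
    using that by (simp add: power_mult_distrib prod.distrib power_sum[symmetric] mons3_def)
  then show ?thesis unfolding evalF_def by (simp add: sum_distrib_left algebra_simps)
qed

definition polar :: "((4 \<Rightarrow> nat) \<Rightarrow> 'a::comm_ring_1) \<Rightarrow> (4 \<Rightarrow> 'a) \<Rightarrow> (4 \<Rightarrow> 'a) \<Rightarrow> 'a" where
  "polar c x y = (\<Sum>j\<in>UNIV. x j * pdF c j y)"

lemma polar_lincomb:
  "polar c (lincomb p u q v) y = p * polar c u y + q * polar c v y"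
  by (simp add: polar_def lincomb_def sum.distrib sum_distrib_left algebra_simps)

lemma polar_unit_vector: "polar c (\<lambda>i. if i = j then 1 else 0) y = pdF c j y"
proof -
  have "(\<Sum>i\<in>UNIV. (if i = j then 1 else 0) * pdF c i y) = (\<Sum>i\<in>UNIV. if i = j then pdF c i y else 0)"
    by (rule sum.cong) auto
  then show ?thesis by (simp add: polar_def)
qed

definition restr :: "((4 \<Rightarrow> nat) \<Rightarrow> 'a::comm_ring_1) \<Rightarrow> (4 \<Rightarrow> 'a) \<Rightarrow> (4 \<Rightarrow> 'a) \<Rightarrow> 'a poly" where
  "restr c x y = (\<Sum>e\<in>mons3. [:c e:] * (\<Prod>i\<in>UNIV. [:y i, x i:] ^ e i))"

text \<open>Its degree is at most 3, and its coefficients of degree 3, 0 and 1 are F(x), F(y)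
  and polar(x, y); only the quadratic coefficient has no closed form here.\<close>
lemma poly_restr: "poly (restr c x y) s = evalF c (\<lambda>i. s * x i + y i)"
  by (simp add: restr_def evalF_def poly_sum poly_prod algebra_simps)

lemma coeff_mult_top:
  fixes p q :: "'a::comm_semiring_1 poly"
  assumes "degree p \<le> m" "degree q \<le> n"
  shows "coeff (p * q) (m + n) = coeff p m * coeff q n"
proof -
  have "coeff p i * coeff q (m + n - i) = (if i = m then coeff p m * coeff q n else 0)" for i
  proof (cases i m rule: linorder_cases)
    case less
    then have "coeff q (m + n - i) = 0" using assms(2) by (intro coeff_eq_0) auto
    then show ?thesis using less by simp
  next
    case greater
    then have "coeff p i = 0" using assms(1) by (intro coeff_eq_0) auto
    then show ?thesis using greater by simp
  qed simp
  then show ?thesis by (simp add: coeff_mult)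
qed

lemma coeff_prod_top:
  fixes f :: "'b \<Rightarrow> 'a::comm_semiring_1 poly"
  assumes "finite A" "\<And>i. i \<in> A \<Longrightarrow> degree (f i) \<le> d i"
  shows "coeff (prod f A) (sum d A) = (\<Prod>i\<in>A. coeff (f i) (d i))"
  using assms
proof (induction A rule: finite_induct)
  case (insert a A)
  have "degree (prod f A) \<le> sum (degree \<circ> f) A" by (rule degree_prod_sum_le[OF insert(1)])
  also have "\<dots> \<le> sum d A" using insert(4) by (intro sum_mono) auto
  finally show ?case using insert by (simp add: coeff_mult_top)
qed simp

lemma degree_linear_power: "degree ([:b, a:] ^ k) \<le> k"
  using degree_power_le[of "[:b, a:]" k] by (simp add: order_trans)

lemma coeff_linear_power: "coeff ([:b, a:] ^ k) k = a ^ k"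
proof (induction k)
  case (Suc k)
  have "coeff ([:b, a:] * [:b, a:] ^ k) (1 + k) = coeff [:b, a:] 1 * coeff ([:b, a:] ^ k) k"
    by (rule coeff_mult_top) (auto simp: degree_linear_power)
  then show ?case using Suc by simp
qed simp

lemma degree_restr: "degree (restr c x y) \<le> 3"
proof (rule degree_le, intro allI impI)
  fix n :: nat
  assume n: "n > 3"
  have "coeff (\<Prod>i\<in>UNIV. [:y i, x i:] ^ e i) n = 0" if "e \<in> mons3" for e
  proof (rule coeff_eq_0)
    have "degree (\<Prod>i\<in>UNIV. [:y i, x i:] ^ e i) \<le> (\<Sum>i\<in>UNIV. degree ([:y i, x i:] ^ e i))"
      using degree_prod_sum_le[of UNIV "\<lambda>i. [:y i, x i:] ^ e i"] by (simp add: o_def)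
    also have "\<dots> \<le> (\<Sum>i\<in>UNIV. e i)" by (intro sum_mono degree_linear_power)
    finally show "degree (\<Prod>i\<in>UNIV. [:y i, x i:] ^ e i) < n" using that n by (simp add: mons3_def)
  qed
  then show "coeff (restr c x y) n = 0" by (simp add: restr_def coeff_sum)
qed

lemma coeff_restr_3: "coeff (restr c x y) 3 = evalF c x"
proof -
  have "coeff (\<Prod>i\<in>UNIV. [:y i, x i:] ^ e i) 3 = (\<Prod>i\<in>UNIV. x i ^ e i)" if "e \<in> mons3" for e
  proof -
    have "coeff (\<Prod>i\<in>UNIV. [:y i, x i:] ^ e i) (\<Sum>i\<in>UNIV. e i)
        = (\<Prod>i\<in>UNIV. coeff ([:y i, x i:] ^ e i) (e i))"
      by (rule coeff_prod_top) (auto simp: degree_linear_power)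
    then show ?thesis using that by (simp add: mons3_def coeff_linear_power)
  qed
  then show ?thesis by (simp add: restr_def coeff_sum evalF_def)
qed

lemma coeff_restr_0: "coeff (restr c x y) 0 = evalF c y"
  using poly_restr[of c x y 0] by (simp add: poly_0_coeff_0)

text \<open>The linear coefficient is the polar form: differentiate at s = 0.\<close>
lemma coeff_restr_1:
  fixes c :: "(4 \<Rightarrow> nat) \<Rightarrow> 'a::idom"
  shows "coeff (restr c x y) 1 = polar c x y"
proof -
  have poly_pderiv: "poly (pderiv (\<Prod>i\<in>UNIV. [:y i, x i:] ^ e i)) 0
     = (\<Sum>j\<in>UNIV. x j * (of_nat (e j) * y j ^ (e j - 1) * (\<Prod>i\<in>UNIV - {j}. y i ^ e i)))" for e
    by (simp add: pderiv_prod poly_sum poly_prod pderiv_power pderiv_pCons mult_ac)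
  have "coeff (restr c x y) 1 = (\<Sum>e\<in>mons3. c e * coeff (\<Prod>i\<in>UNIV. [:y i, x i:] ^ e i) 1)"
    by (simp add: restr_def coeff_sum)
  also have "\<dots> = (\<Sum>e\<in>mons3. c e * poly (pderiv (\<Prod>i\<in>UNIV. [:y i, x i:] ^ e i)) 0)"
    by (simp add: poly_0_coeff_0 coeff_pderiv)
  also have "\<dots> = (\<Sum>e\<in>mons3. \<Sum>j\<in>UNIV.
      x j * (c e * of_nat (e j) * y j ^ (e j - 1) * (\<Prod>i\<in>UNIV - {j}. y i ^ e i)))"
    by (simp add: poly_pderiv sum_distrib_left mult_ac)
  also have "\<dots> = polar c x y"
    by (subst sum.swap) (simp add: polar_def pdF_def sum_distrib_left)
  finally show ?thesis .
qed

lemma binary_form: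
  fixes c :: "(4 \<Rightarrow> nat) \<Rightarrow> 'a::field"
  shows "evalF c (lincomb s x t y) = evalF c x * s ^ 3 + coeff (restr c x y) 2 * s ^ 2 * t
           + polar c x y * s * t ^ 2 + evalF c y * t ^ 3"
proof (cases "t = 0")
  case True
  then show ?thesis by (simp add: lincomb_def evalF_scale)
next
  case False
  let ?p = "restr c x y"
  have "lincomb s x t y = (\<lambda>i. t * ((s / t) * x i + y i))"
    using False by (simp add: lincomb_def distrib_left)
  then have "evalF c (lincomb s x t y) = t ^ 3 * poly ?p (s / t)"
    by (simp add: evalF_scale poly_restr)
  also have "poly ?p (s / t) = poly (\<Sum>i\<le>3. monom (coeff ?p i) i) (s / t)"
    by (simp only: poly_as_sum_of_monoms'[OF degree_restr])
  also have "\<dots> = (\<Sum>i\<le>3. coeff ?p i * (s / t) ^ i)"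
    by (simp add: poly_sum poly_monom)
  also have "t ^ 3 * \<dots> = coeff ?p 3 * s ^ 3 + coeff ?p 2 * s ^ 2 * t + coeff ?p 1 * s * t ^ 2
      + coeff ?p 0 * t ^ 3"
    using False by (simp add: eval_nat_numeral atMost_Suc field_simps)
  finally show ?thesis
    using coeff_restr_3[of c x y] coeff_restr_1[of c x y] coeff_restr_0[of c x y] by simp
qed

lemma restr_eq_0_iff:
  fixes c :: "(4 \<Rightarrow> nat) \<Rightarrow> 'a::field"
  shows "restr c x y = 0 \<longleftrightarrow>
    evalF c x = 0 \<and> coeff (restr c x y) 2 = 0 \<and> polar c x y = 0 \<and> evalF c y = 0"
proof
  assume vanish: "evalF c x = 0 \<and> coeff (restr c x y) 2 = 0 \<and> polar c x y = 0 \<and> evalF c y = 0"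
  have "coeff (restr c x y) n = 0" for n
  proof (cases "n > 3")
    case True
    then show ?thesis using degree_restr[of c x y] by (intro coeff_eq_0) simp
  next
    case False
    then have "n = 0 \<or> n = 1 \<or> n = 2 \<or> n = 3" by arith
    then show ?thesis
      using vanish coeff_restr_3[of c x y] coeff_restr_1[of c x y] coeff_restr_0[of c x y] by auto
  qed
  then show "restr c x y = 0" by (simp add: poly_eqI)
qed (use coeff_restr_3[of c x y] coeff_restr_1[of c x y] coeff_restr_0[of c x y] in auto)

lemma map_poly_to_ac_add: "map_poly to_ac (p + q) = map_poly to_ac p + map_poly to_ac q"
  by (rule poly_eqI) (simp add: coeff_map_poly)

lemma map_poly_to_ac_mult: "map_poly to_ac (p * q) = map_poly to_ac p * map_poly to_ac q"
  by (rule poly_eqI) (simp add: coeff_map_poly coeff_mult to_ac_sum)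

lemma map_poly_to_ac_sum: "map_poly to_ac (\<Sum>i\<in>A. f i) = (\<Sum>i\<in>A. map_poly to_ac (f i))"
  by (induction A rule: infinite_finite_induct) (simp_all add: map_poly_to_ac_add)

lemma map_poly_to_ac_prod: "map_poly to_ac (\<Prod>i\<in>A. f i) = (\<Prod>i\<in>A. map_poly to_ac (f i))"
  by (induction A rule: infinite_finite_induct) (simp_all add: map_poly_to_ac_mult)

lemma map_poly_to_ac_power: "map_poly to_ac (p ^ n) = map_poly to_ac p ^ n"
  by (induction n) (simp_all add: map_poly_to_ac_mult)

lemma restr_ext:
  "restr (ext_coeffs c) (ext_vec x) (ext_vec y) = map_poly to_ac (restr c x y)"
  by (simp add: restr_def ext_coeffs_def ext_vec_def map_poly_to_ac_sum map_poly_to_ac_mult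
      map_poly_to_ac_prod map_poly_to_ac_power map_poly_pCons map_poly_smult)

section \<open>Algebraically closed fields are infinite\<close>

text \<open>If the field were finite, 1 + (product of all X - a) would be a nonconstant
  polynomial without roots.\<close>
lemma infinite_alg_closed_field: "infinite (UNIV :: 'a::alg_closed_field set)"
proof
  assume fin: "finite (UNIV :: 'a set)"
  define q :: "'a poly" where "q = (\<Prod>a\<in>UNIV. [:- a, 1:])"
  have "degree q = card (UNIV :: 'a set)"
    unfolding q_def by (subst degree_prod_eq_sum_degree) auto
  then have "degree q > 0" using fin by (simp add: finite_UNIV_card_ge_0)
  then have "degree (1 + q) > 0" by (simp add: degree_add_eq_right)
  then obtain x where "poly (1 + q) x = 0" using alg_closed_imp_poly_has_root by blast
  moreover have "poly q x = 0" unfolding q_def using fin by (simp add: poly_prod prod_zero_iff)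
  ultimately show False by simp
qed

lemma exists_non_root:
  fixes p :: "'a::alg_closed_field poly"
  assumes "p \<noteq> 0"
  shows "\<exists>x. poly p x \<noteq> 0"
proof (rule ccontr)
  assume "\<not> ?thesis"
  then have "{x. poly p x = 0} = UNIV" by auto
  then show False using poly_roots_finite[OF assms] infinite_alg_closed_field[where 'a='a] by simp
qed

lemma ppt_self: "x \<in> ppt x"
  unfolding ppt_def by (rule CollectI, rule exI[of _ 1]) simp

lemma ppt_eqD: "ppt x = ppt y \<Longrightarrow> \<exists>a. a \<noteq> 0 \<and> x = (\<lambda>i. a * y i)"
  using ppt_self[of x] unfolding ppt_def by auto

lemma ppt_scale:
  assumes "a \<noteq> 0"
  shows "ppt (\<lambda>i. a * x i) = ppt x"
proof (rule Set.set_eqI)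
  fix z
  show "z \<in> ppt (\<lambda>i. a * x i) \<longleftrightarrow> z \<in> ppt x"
  proof
    assume "z \<in> ppt (\<lambda>i. a * x i)"
    then obtain b where "b \<noteq> 0" "z = (\<lambda>i. b * (a * x i))" by (auto simp: ppt_def)
    then show "z \<in> ppt x"
      unfolding ppt_def using assms by (intro CollectI exI[of _ "b * a"]) (simp add: mult.assoc)
  next
    assume "z \<in> ppt x"
    then obtain b where "b \<noteq> 0" "z = (\<lambda>i. b * x i)" by (auto simp: ppt_def)
    then show "z \<in> ppt (\<lambda>i. a * x i)"
      unfolding ppt_def using assms by (intro CollectI exI[of _ "b / a"]) simp
  qed
qed

lemma surf_pts_evalF: "ppt z \<in> surf_pts c \<Longrightarrow> evalF c z = 0"
proof -
  assume "ppt z \<in> surf_pts c"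
  then obtain x where "ppt z = ppt x" "evalF c x = 0" unfolding surf_pts_def by auto
  then show ?thesis using ppt_eqD[of z x] by (auto simp: evalF_scale)
qed

lemma surf_ptsI: "z \<noteq> (\<lambda>_. 0) \<Longrightarrow> evalF c z = 0 \<Longrightarrow> ppt z \<in> surf_pts c"
  unfolding surf_pts_def by auto

lemma line_ptsI: "(s, t) \<noteq> (0, 0) \<Longrightarrow> ppt (lincomb s u t v) \<in> line_pts u v"
  unfolding line_pts_def by blast

lemma lincomb_1_0 [simp]: "lincomb 1 x 0 y = x" and lincomb_0_1 [simp]: "lincomb 0 x 1 y = y"
  by (simp_all add: lincomb_def)

lemma lincomb_swap: "lincomb s u t v = lincomb t v s u"
  by (simp add: lincomb_def add.commute)

lemma line_pts_swap: "line_pts u v = line_pts v u"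
proof -
  have "line_pts u v \<subseteq> line_pts v u" for u v :: "4 \<Rightarrow> 'a"
  proof
    fix P assume "P \<in> line_pts u v"
    then obtain s t where "(s, t) \<noteq> (0, 0)" "P = ppt (lincomb s u t v)" unfolding line_pts_def by blast
    then show "P \<in> line_pts v u" using line_ptsI[of t s v u] lincomb_swap[of s u t v] by auto
  qed
  then show ?thesis by blast
qed

lemma lincomb_nonzero: "indep2 u v \<Longrightarrow> (s, t) \<noteq> (0, 0) \<Longrightarrow> lincomb s u t v \<noteq> (\<lambda>_. 0)"
  unfolding indep2_def by blast

lemma indep2_iff_minor: "indep2 u v \<longleftrightarrow> (\<exists>i j. u i * v j - u j * v i \<noteq> 0)"
proof
  assume ind: "indep2 u v"
  have "v \<noteq> (\<lambda>_. 0)"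
    using lincomb_nonzero[OF ind, of 0 1] by (auto simp: lincomb_def)
  then obtain j where "v j \<noteq> 0" by auto
  moreover have "lincomb (v j) u (- u j) v \<noteq> (\<lambda>_. 0)"
    using lincomb_nonzero[OF ind] \<open>v j \<noteq> 0\<close> by simp
  ultimately show "\<exists>i j. u i * v j - u j * v i \<noteq> 0"
    by (auto simp: lincomb_def fun_eq_iff algebra_simps)
next
  assume "\<exists>i j. u i * v j - u j * v i \<noteq> 0"
  then obtain i j where minor: "u i * v j - u j * v i \<noteq> 0" by blast
  show "indep2 u v" unfolding indep2_def
  proof (intro allI impI)
    fix s t assume "lincomb s u t v = (\<lambda>_. 0)"
    then have ei: "s * u i + t * v i = 0" and ej: "s * u j + t * v j = 0"
      by (auto simp: lincomb_def fun_eq_iff)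
    have "s * (u i * v j - u j * v i) = v j * (s * u i + t * v i) - v i * (s * u j + t * v j)"
      "t * (u i * v j - u j * v i) = u i * (s * u j + t * v j) - u j * (s * u i + t * v i)"
      by (simp_all add: algebra_simps)
    then have "s * (u i * v j - u j * v i) = 0" "t * (u i * v j - u j * v i) = 0"
      by (simp_all add: ei ej)
    then show "s = 0 \<and> t = 0" using minor by simp
  qed
qed

lemma evalF_ext: "evalF (ext_coeffs c) (ext_vec x) = to_ac (evalF c x)"
  by (simp add: evalF_def ext_coeffs_def ext_vec_def to_ac_sum to_ac_prod)

lemma pdF_ext: "pdF (ext_coeffs c) j (ext_vec x) = to_ac (pdF c j x)"
  by (simp add: pdF_def ext_coeffs_def ext_vec_def to_ac_sum to_ac_prod)

lemma polar_ext: "polar (ext_coeffs c) (ext_vec x) (ext_vec y) = to_ac (polar c x y)"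
  by (simp add: polar_def pdF_ext to_ac_sum) (simp add: ext_vec_def)

lemma ext_lincomb: "ext_vec (lincomb s u t v) = lincomb (to_ac s) (ext_vec u) (to_ac t) (ext_vec v)"
  by (simp add: ext_vec_def lincomb_def)

lemma ext_vec_eq_0_iff: "ext_vec x = (\<lambda>_. 0) \<longleftrightarrow> x = (\<lambda>_. 0)"
  by (auto simp: ext_vec_def fun_eq_iff)

lemma ext_indep2: "indep2 u v \<Longrightarrow> indep2 (ext_vec u) (ext_vec v)"
  by (simp add: indep2_iff_minor ext_vec_def flip: to_ac_mult to_ac_diff)

lemma ext_line_ptsI:
  "(s, t) \<noteq> (0, 0) \<Longrightarrow> ppt (ext_vec (lincomb s u t v)) \<in> line_pts (ext_vec u) (ext_vec v)"
  by (simp add: ext_lincomb line_ptsI)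

lemma binary_form_ext:
  "evalF (ext_coeffs c) (lincomb s (ext_vec x) t (ext_vec y)) =
     to_ac (evalF c x) * s ^ 3 + to_ac (coeff (restr c x y) 2) * s ^ 2 * t
     + to_ac (polar c x y) * s * t ^ 2 + to_ac (evalF c y) * t ^ 3"
  by (simp add: binary_form evalF_ext polar_ext restr_ext coeff_map_poly)

text \<open>Containment of the line xy in S (over the algebraic closure) is detected by the
  vanishing of the restriction polynomial; one direction needs that the closure is infinite.\<close>
lemma Kline_on_surface_iff_restr:
  assumes ind: "indep2 x y"
  shows "Kline_on_surface c x y \<longleftrightarrow> restr c x y = 0"
proof
  assume "Kline_on_surface c x y"
  then have on: "line_pts (ext_vec x) (ext_vec y) \<subseteq> surf_pts (ext_coeffs c)"
    by (simp add: Kline_on_surface_def)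
  show "restr c x y = 0"
  proof (rule ccontr)
    assume "restr c x y \<noteq> 0"
    then have "restr (ext_coeffs c) (ext_vec x) (ext_vec y) \<noteq> 0"
      by (simp add: restr_ext map_poly_eq_0_iff)
    then obtain s where "poly (restr (ext_coeffs c) (ext_vec x) (ext_vec y)) s \<noteq> 0"
      using exists_non_root by blast
    then have "evalF (ext_coeffs c) (lincomb s (ext_vec x) 1 (ext_vec y)) \<noteq> 0"
      by (simp add: poly_restr lincomb_def)
    moreover have "ppt (lincomb s (ext_vec x) 1 (ext_vec y)) \<in> surf_pts (ext_coeffs c)"
      using on line_ptsI[of s 1 "ext_vec x" "ext_vec y"] by auto
    ultimately show False using surf_pts_evalF by blast
  qed
next
  assume "restr c x y = 0"
  then have vanish: "evalF c x = 0" "coeff (restr c x y) 2 = 0" "polar c x y = 0" "evalF c y = 0"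
    by (simp_all add: restr_eq_0_iff)
  have "line_pts (ext_vec x) (ext_vec y) \<subseteq> surf_pts (ext_coeffs c)"
  proof
    fix P assume "P \<in> line_pts (ext_vec x) (ext_vec y)"
    then obtain s t where st: "(s, t) \<noteq> (0, 0)" "P = ppt (lincomb s (ext_vec x) t (ext_vec y))"
      unfolding line_pts_def by blast
    have "evalF (ext_coeffs c) (lincomb s (ext_vec x) t (ext_vec y)) = 0"
      by (simp add: binary_form_ext vanish)
    then show "P \<in> surf_pts (ext_coeffs c)"
      using st lincomb_nonzero[OF ext_indep2[OF ind] st(1)] by (simp add: surf_ptsI)
  qed
  then show "Kline_on_surface c x y" using ind by (simp add: Kline_on_surface_def)
qed

lemma indep2_swap: "indep2 u v \<longleftrightarrow> indep2 v u"
  unfolding indep2_def using lincomb_swap by metis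

lemma Kline_on_surface_swap: "Kline_on_surface c x y \<longleftrightarrow> Kline_on_surface c y x"
  by (simp add: Kline_on_surface_def indep2_swap[of x] line_pts_swap[of "ext_vec x"])

lemma Kline_evalF:
  assumes "Kline_on_surface c u v"
  shows "evalF c (lincomb s u t v) = 0"
proof -
  have "restr c u v = 0"
    using assms Kline_on_surface_iff_restr Kline_on_surface_def by blast
  then show ?thesis by (simp add: binary_form restr_eq_0_iff)
qed

lemma Kline_points_on_surface:
  assumes "Kline_on_surface c u v"
  shows "line_pts u v \<subseteq> surf_pts c"
proof
  fix P assume "P \<in> line_pts u v"
  then obtain s t where st: "(s, t) \<noteq> (0, 0)" "P = ppt (lincomb s u t v)" unfolding line_pts_def by blast
  have "indep2 u v" using assms by (simp add: Kline_on_surface_def)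
  then show "P \<in> surf_pts c"
    using st lincomb_nonzero[of u v s t] Kline_evalF[OF assms] by (simp add: surf_ptsI)
qed

lemma Kline_line_on_surface:
  "Kline_on_surface c u v \<Longrightarrow> line_on_surface (ext_coeffs c) (line_pts (ext_vec u) (ext_vec v))"
  unfolding Kline_on_surface_def line_on_surface_def is_line_def using ext_indep2 by blast

section \<open>Third points of secant lines\<close>

lemma third_ptI:
  assumes "indep2 u v" "\<not> line_pts (ext_vec u) (ext_vec v) \<subseteq> surf_pts (ext_coeffs c)"
    and "(a1, b1) \<noteq> (0, 0)" "(a2, b2) \<noteq> (0, 0)" "(a3, b3) \<noteq> (0, 0)" "lam \<noteq> 0"
    and "\<And>s t. evalF (ext_coeffs c) (lincomb s (ext_vec u) t (ext_vec v)) =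
           to_ac lam * (to_ac b1 * s - to_ac a1 * t) * (to_ac b2 * s - to_ac a2 * t)
             * (to_ac b3 * s - to_ac a3 * t)"
  shows "third_pt c (ppt (lincomb a1 u b1 v)) (ppt (lincomb a2 u b2 v)) (ppt (lincomb a3 u b3 v))"
  unfolding third_pt_def
  apply (rule exI[of _ u], rule exI[of _ v], rule exI[of _ a1], rule exI[of _ b1], rule exI[of _ a2],
      rule exI[of _ b2], rule exI[of _ a3], rule exI[of _ b3], rule exI[of _ lam])
  using assms by blast

lemma third_pt_swap:
  assumes "third_pt c P Q R"
  shows "third_pt c P R Q"
proof -
  obtain u v a1 b1 a2 b2 a3 b3 lam where
    line: "indep2 u v" "\<not> line_pts (ext_vec u) (ext_vec v) \<subseteq> surf_pts (ext_coeffs c)"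
    and pts: "(a1, b1) \<noteq> (0, 0)" "(a2, b2) \<noteq> (0, 0)" "(a3, b3) \<noteq> (0, 0)"
      "P = ppt (lincomb a1 u b1 v)" "Q = ppt (lincomb a2 u b2 v)" "R = ppt (lincomb a3 u b3 v)"
    and lam: "lam \<noteq> 0"
    and factor: "\<And>s t. evalF (ext_coeffs c) (lincomb s (ext_vec u) t (ext_vec v)) =
        to_ac lam * (to_ac b1 * s - to_ac a1 * t) * (to_ac b2 * s - to_ac a2 * t)
          * (to_ac b3 * s - to_ac a3 * t)"
    using assms unfolding third_pt_def by (elim exE conjE) blast
  have "evalF (ext_coeffs c) (lincomb s (ext_vec u) t (ext_vec v)) =
      to_ac lam * (to_ac b1 * s - to_ac a1 * t) * (to_ac b3 * s - to_ac a3 * t)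
        * (to_ac b2 * s - to_ac a2 * t)" for s t
    unfolding factor by (simp only: mult.assoc mult.commute[of "to_ac b2 * s - to_ac a2 * t"])
  then show ?thesis unfolding pts(4-6) by (rule third_ptI[OF line pts(1,3,2) lam])
qed

text \<open>A line through two K-points x, y of S that does not lie on S meets S in a third
  K-point: the restriction is s t (k s + polar(x, y) t), so the third point is
  polar(x, y) x - k y.\<close>
lemma chord_third_point:
  assumes ind: "indep2 x y" and Fx: "evalF c x = 0" and Fy: "evalF c y = 0"
    and off: "\<not> Kline_on_surface c x y"
  defines "w \<equiv> lincomb (polar c x y) x (- coeff (restr c x y) 2) y"
  shows "ppt w \<in> surf_pts c" and "third_pt c (ppt x) (ppt y) (ppt w)"
proof -
  let ?k = "coeff (restr c x y) 2" and ?l = "polar c x y"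
  have nz: "(?l, - ?k) \<noteq> (0, 0)"
    using off Kline_on_surface_iff_restr[OF ind] Fx Fy by (auto simp: restr_eq_0_iff)
  have "evalF c w = 0"
    by (simp add: w_def binary_form Fx Fy power2_eq_square)
  then show "ppt w \<in> surf_pts c"
    using lincomb_nonzero[OF ind nz] by (simp add: w_def surf_ptsI)
  have "third_pt c (ppt (lincomb 1 x 0 y)) (ppt (lincomb 0 x 1 y)) (ppt (lincomb ?l x (- ?k) y))"
  proof (rule third_ptI[where lam = 1])
    show "\<not> line_pts (ext_vec x) (ext_vec y) \<subseteq> surf_pts (ext_coeffs c)"
      using off ind by (simp add: Kline_on_surface_def)
    show "evalF (ext_coeffs c) (lincomb s (ext_vec x) t (ext_vec y)) =
        to_ac 1 * (to_ac 0 * s - to_ac 1 * t) * (to_ac 1 * s - to_ac 0 * t)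
          * (to_ac (- ?k) * s - to_ac ?l * t)" for s t
      by (simp add: binary_form_ext Fx Fy algebra_simps power2_eq_square)
  qed (use ind nz in auto)
  then show "third_pt c (ppt x) (ppt y) (ppt w)" by (simp add: w_def)
qed

section \<open>Two skew lines span the ambient space\<close>

text \<open>Vectors on two skew lines are linearly independent: a relation x + y = 0 with x, y
  nonzero would make [x] a common point.\<close>
lemma skew_lines_independent:
  fixes u v u' v' :: "4 \<Rightarrow> 'a::field"
  assumes ind: "indep2 u v" "indep2 u' v'" and skew: "line_pts u v \<inter> line_pts u' v' = {}"
    and rel: "lincomb 1 (lincomb a u b v) 1 (lincomb a' u' b' v') = (\<lambda>_. 0)"
  shows "(a, b) = (0, 0) \<and> (a', b') = (0, 0)"
proof (cases "(a, b) = (0, 0)")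
  case True
  then have "lincomb a' u' b' v' = (\<lambda>_. 0)" using rel by (simp add: lincomb_def)
  then show ?thesis using True lincomb_nonzero[OF ind(2)] by blast
next
  case False
  have eq: "lincomb a u b v = lincomb (- a') u' (- b') v'"
  proof
    fix i
    have "(a * u i + b * v i) + (a' * u' i + b' * v' i) = 0"
      using fun_cong[OF rel, of i] by (simp add: lincomb_def)
    then have "a * u i + b * v i = - (a' * u' i + b' * v' i)"
      by (simp only: eq_neg_iff_add_eq_0)
    then show "lincomb a u b v i = lincomb (- a') u' (- b') v' i"
      by (simp add: lincomb_def)
  qed
  have "(- a', - b') \<noteq> (0, 0)"
  proof
    assume "(- a', - b') = (0, 0)"
    then have "lincomb a u b v = (\<lambda>_. 0)" unfolding eq by (simp add: lincomb_def)
    then show False using lincomb_nonzero[OF ind(1) False] by blast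
  qed
  then have "ppt (lincomb a u b v) \<in> line_pts u' v'" unfolding eq by (rule line_ptsI)
  then show ?thesis using line_ptsI[OF False, of u v] skew by blast
qed

text \<open>Four independent vectors of K^4 span it when K is finite (counting argument).\<close>
lemma independent_spanning:
  fixes w1 w2 w3 w4 :: "4 \<Rightarrow> 'k::{field,finite}"
  assumes indep: "\<And>a b a' b'. lincomb 1 (lincomb a w1 b w2) 1 (lincomb a' w3 b' w4) = (\<lambda>_. 0)
                     \<Longrightarrow> (a, b) = (0, 0) \<and> (a', b') = (0, 0)"
  shows "\<exists>a b a' b'. z = lincomb 1 (lincomb a w1 b w2) 1 (lincomb a' w3 b' w4)"
proof -
  define f where "f = (\<lambda>(a, b, a', b'). lincomb 1 (lincomb a w1 b w2) 1 (lincomb a' w3 b' w4))"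
  have "inj f"
  proof (rule injI)
    fix p q :: "'k \<times> 'k \<times> 'k \<times> 'k"
    assume "f p = f q"
    moreover obtain a b a' b' where p: "p = (a, b, a', b')" by (cases p) auto
    moreover obtain \<alpha> \<beta> \<alpha>' \<beta>' where q: "q = (\<alpha>, \<beta>, \<alpha>', \<beta>')" by (cases q) auto
    ultimately have "lincomb 1 (lincomb (a - \<alpha>) w1 (b - \<beta>) w2) 1 (lincomb (a' - \<alpha>') w3 (b' - \<beta>') w4)
        = (\<lambda>_. 0)"
      by (auto simp: f_def lincomb_def fun_eq_iff algebra_simps)
    from indep[OF this] show "p = q" using p q by simp
  qed
  then have "card (range f) = CARD('k \<times> 'k \<times> 'k \<times> 'k)" by (simp add: card_image)
  also have "\<dots> = CARD(4 \<Rightarrow> 'k)" by (simp add: card_fun eval_nat_numeral)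
  finally have "range f = UNIV" by (intro card_subset_eq) auto
  then obtain p where "z = f p" by (metis UNIV_I imageE)
  moreover obtain a b a' b' where "p = (a, b, a', b')" by (cases p) auto
  ultimately show ?thesis unfolding f_def by auto
qed

lemma smooth_polar_nonzero:
  assumes "smooth_cubic c" "z \<noteq> (\<lambda>_. 0)" "evalF c z = 0"
  shows "\<exists>w. polar c w z \<noteq> 0"
proof -
  obtain j where "pdF (ext_coeffs c) j (ext_vec z) \<noteq> 0"
    using assms unfolding smooth_cubic_def by (metis evalF_ext ext_vec_eq_0_iff to_ac_0)
  then have "polar c (\<lambda>i. if i = j then 1 else 0) z \<noteq> 0"
    by (simp add: pdF_ext polar_unit_vector)
  then show ?thesis by blast
qed

lemma independent_nonvanishing_point:
  fixes a b \<alpha> \<beta> :: "'a::field"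
  assumes ab: "(a, b) \<noteq> (0, 0)" and form: "(\<alpha>, \<beta>) \<noteq> (0, 0)"
  shows "\<exists>p q. a * q - b * p \<noteq> 0 \<and> p * \<alpha> + q * \<beta> \<noteq> 0"
proof (cases "a * \<alpha> + b * \<beta> = 0")
  case False
  then have "a * (b + \<alpha>) - b * (a - \<beta>) \<noteq> 0 \<and> (a - \<beta>) * \<alpha> + (b + \<alpha>) * \<beta> \<noteq> 0"
    by (simp add: algebra_simps)
  then show ?thesis by blast
next
  case True
  show ?thesis
  proof (cases "\<alpha> = 0")
    case False
    then have "b \<noteq> 0" using True ab by auto
    then have "a * 0 - b * 1 \<noteq> 0 \<and> 1 * \<alpha> + 0 * \<beta> \<noteq> 0" using False by simp
    then show ?thesis by blast
  next
    case True
    then have "\<beta> \<noteq> 0" "a \<noteq> 0" using \<open>a * \<alpha> + b * \<beta> = 0\<close> form ab by auto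
    then have "a * 1 - b * 0 \<noteq> 0 \<and> 0 * \<alpha> + 1 * \<beta> \<noteq> 0" by simp
    then show ?thesis by blast
  qed
qed

section \<open>The configuration: two skew K-lines on S\<close>

locale skew_Klines =
  fixes c :: "(4 \<Rightarrow> nat) \<Rightarrow> 'k::{field, finite}" and u1 v1 u2 v2 :: "4 \<Rightarrow> 'k"
  assumes line1: "Kline_on_surface c u1 v1" and line2: "Kline_on_surface c u2 v2"
    and skew: "line_pts (ext_vec u1) (ext_vec v1) \<inter> line_pts (ext_vec u2) (ext_vec v2) = {}"
begin

abbreviation vec1 :: "'k \<Rightarrow> 'k \<Rightarrow> 4 \<Rightarrow> 'k" where "vec1 a b \<equiv> lincomb a u1 b v1"
abbreviation vec2 :: "'k \<Rightarrow> 'k \<Rightarrow> 4 \<Rightarrow> 'k" where "vec2 a b \<equiv> lincomb a u2 b v2"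
abbreviation Span :: "(4 \<Rightarrow> 'k) set set" where
  "Span \<equiv> spanS c (line_pts u1 v1 \<union> line_pts u2 v2)"

lemma indep_line1: "indep2 u1 v1" and indep_line2: "indep2 u2 v2"
  using line1 line2 by (simp_all add: Kline_on_surface_def)

lemma independent_ext:
  "lincomb 1 (lincomb a (ext_vec u1) b (ext_vec v1)) 1 (lincomb a' (ext_vec u2) b' (ext_vec v2))
     = (\<lambda>_. 0) \<Longrightarrow> (a, b) = (0, 0) \<and> (a', b') = (0, 0)"
  using skew_lines_independent[OF ext_indep2[OF indep_line1] ext_indep2[OF indep_line2] skew] by blast

lemma independent:
  assumes "lincomb 1 (vec1 a b) 1 (vec2 a' b') = (\<lambda>_. 0)"
  shows "(a, b) = (0, 0) \<and> (a', b') = (0, 0)"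
proof -
  have "ext_vec (lincomb 1 (vec1 a b) 1 (vec2 a' b')) = (\<lambda>_. 0)"
    using assms by (simp add: ext_vec_eq_0_iff)
  then have "lincomb 1 (lincomb (to_ac a) (ext_vec u1) (to_ac b) (ext_vec v1))
      1 (lincomb (to_ac a') (ext_vec u2) (to_ac b') (ext_vec v2)) = (\<lambda>_. 0)"
    by (simp add: ext_lincomb)
  from independent_ext[OF this] show ?thesis by simp
qed

lemma decompose: "\<exists>a b a' b'. z = lincomb 1 (vec1 a b) 1 (vec2 a' b')"
  using independent_spanning[OF independent] by blast

lemma indep_secant:
  assumes pq: "(p, q) \<noteq> (0, 0)" and ab': "(a', b') \<noteq> (0, 0)"
  shows "indep2 (vec1 p q) (lincomb 1 (vec1 a b) 1 (vec2 a' b'))"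
  unfolding indep2_def
proof (intro allI impI)
  fix s t
  assume "lincomb s (vec1 p q) t (lincomb 1 (vec1 a b) 1 (vec2 a' b')) = (\<lambda>_. 0)"
  then have "lincomb 1 (vec1 (s * p + t * a) (s * q + t * b)) 1 (vec2 (t * a') (t * b')) = (\<lambda>_. 0)"
    by (simp add: lincomb_def fun_eq_iff algebra_simps)
  from independent[OF this]
  have rel: "s * p + t * a = 0" "s * q + t * b = 0" "t * a' = 0" "t * b' = 0" by simp_all
  then have "t = 0" using ab' by auto
  then show "s = 0 \<and> t = 0" using rel pq by auto
qed

lemma indep_cross: "(a, b) \<noteq> (0, 0) \<Longrightarrow> (a', b') \<noteq> (0, 0) \<Longrightarrow> indep2 (vec1 a b) (vec2 a' b')"
  using indep_secant[of a b a' b' 0 0] by (simp add: lincomb_def)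

lemma evalF_vec1: "evalF c (vec1 a b) = 0" and evalF_vec2: "evalF c (vec2 a b) = 0"
  using Kline_evalF[OF line1] Kline_evalF[OF line2] by blast+

lemma vec1_in_Span: "(a, b) \<noteq> (0, 0) \<Longrightarrow> ppt (vec1 a b) \<in> Span"
  and vec2_in_Span: "(a, b) \<noteq> (0, 0) \<Longrightarrow> ppt (vec2 a b) \<in> Span"
  by (simp_all add: line_ptsI spanS.base)

lemma Span_subset_surface: "Span \<subseteq> surf_pts c"
proof
  fix P assume "P \<in> Span"
  then show "P \<in> surf_pts c"
  proof (induction rule: spanS.induct)
    case (base R)
    then show ?case using Kline_points_on_surface[OF line1] Kline_points_on_surface[OF line2] by blast
  qed simp
qed

text \<open>The easy case: if the line through x \<in> l1 and y \<in> l2 is not on S, then [x + y] is the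
  third intersection point (the restriction is k s t (s - t)).\<close>
lemma chord_step:
  assumes ab: "(a, b) \<noteq> (0, 0)" and ab': "(a', b') \<noteq> (0, 0)"
    and onS: "evalF c (lincomb 1 (vec1 a b) 1 (vec2 a' b')) = 0"
    and off: "\<not> Kline_on_surface c (vec1 a b) (vec2 a' b')"
  shows "ppt (lincomb 1 (vec1 a b) 1 (vec2 a' b')) \<in> Span"
proof -
  let ?x = "vec1 a b" and ?y = "vec2 a' b'"
  let ?k = "coeff (restr c ?x ?y) 2" and ?l = "polar c ?x ?y"
  have ind: "indep2 ?x ?y" using indep_cross[OF ab ab'] .
  note chord = chord_third_point[OF ind evalF_vec1 evalF_vec2 off]
  have "?k + ?l = 0"
    using onS binary_form[of c 1 ?x 1 ?y] evalF_vec1[of a b] evalF_vec2[of a' b'] by simp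
  moreover have "(?k, ?l) \<noteq> (0, 0)"
    using off Kline_on_surface_iff_restr[OF ind] by (auto simp: restr_eq_0_iff evalF_vec1 evalF_vec2)
  ultimately have l: "?l \<noteq> 0" and k: "- ?k = ?l" by (auto simp: add_eq_0_iff2)
  have "lincomb ?l ?x (- ?k) ?y = (\<lambda>i. ?l * lincomb 1 ?x 1 ?y i)"
    using k by (simp add: lincomb_def algebra_simps)
  then have "ppt (lincomb ?l ?x (- ?k) ?y) = ppt (lincomb 1 ?x 1 ?y)" using ppt_scale[OF l] by simp
  then show ?thesis
    using spanS.step[OF vec1_in_Span[OF ab] vec2_in_Span[OF ab'] chord] by simp
qed

lemma secants_distinct:
  assumes det: "a * q - b * p \<noteq> 0"
  shows "line_pts (ext_vec (vec1 a b)) (ext_vec (vec2 a' b'))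
     \<noteq> line_pts (ext_vec (vec1 p q)) (ext_vec (vec2 a' b'))"
proof
  let ?X = "ext_vec (vec1 a b)" and ?Y = "ext_vec (vec2 a' b')"
  assume "line_pts ?X ?Y = line_pts (ext_vec (vec1 p q)) ?Y"
  then have "ppt (ext_vec (vec1 p q)) \<in> line_pts ?X ?Y"
    using line_ptsI[of 1 0 "ext_vec (vec1 p q)" ?Y] by simp
  then obtain s t where "ppt (ext_vec (vec1 p q)) = ppt (lincomb s ?X t ?Y)"
    unfolding line_pts_def by blast
  then obtain \<alpha> where "ext_vec (vec1 p q) = (\<lambda>i. \<alpha> * lincomb s ?X t ?Y i)"
    using ppt_eqD by blast
  then have "lincomb 1 (lincomb (\<alpha> * s * to_ac a - to_ac p) (ext_vec u1) (\<alpha> * s * to_ac b - to_ac q) (ext_vec v1))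
      1 (lincomb (\<alpha> * t * to_ac a') (ext_vec u2) (\<alpha> * t * to_ac b') (ext_vec v2)) = (\<lambda>_. 0)"
    by (simp add: ext_vec_def lincomb_def fun_eq_iff algebra_simps)
  from independent_ext[OF this] have "to_ac p = \<alpha> * s * to_ac a" "to_ac q = \<alpha> * s * to_ac b"
    by simp_all
  then have "to_ac (a * q - b * p) = 0" by (simp add: algebra_simps)
  then have "a * q - b * p = 0" by (simp only: to_ac_eq_0_iff)
  then show False using det by simp
qed

text \<open>If the secants from two different points of l1 to a point y \<in> l2 both lie on S,
  then y lies on three lines of S (these two and l2): a K-rational Eckardt point on l2.\<close>
lemma two_secants_Eckardt:
  assumes ab: "(a, b) \<noteq> (0, 0)" and det: "a * q - b * p \<noteq> 0" and ab': "(a', b') \<noteq> (0, 0)"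
    and on: "Kline_on_surface c (vec1 a b) (vec2 a' b')"
    and on': "Kline_on_surface c (vec1 p q) (vec2 a' b')"
  shows "Kline_has_K_eckardt c u2 v2"
proof -
  have pq: "(p, q) \<noteq> (0, 0)" using det by auto
  let ?Y = "ext_vec (vec2 a' b')" and ?L2 = "line_pts (ext_vec u2) (ext_vec v2)"
  let ?L = "line_pts (ext_vec (vec1 a b)) ?Y" and ?L' = "line_pts (ext_vec (vec1 p q)) ?Y"
  have Y: "ppt ?Y \<in> ?L2" "ppt ?Y \<in> ?L" "ppt ?Y \<in> ?L'"
    using ext_line_ptsI[OF ab'] line_ptsI[of 0 1 _ ?Y] by auto
  have "ppt (ext_vec (vec1 a b)) \<in> ?L" "ppt (ext_vec (vec1 p q)) \<in> ?L'"
    using line_ptsI[of 1 0 _ ?Y] by auto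
  moreover have "ppt (ext_vec (vec1 a b)) \<in> line_pts (ext_vec u1) (ext_vec v1)"
    "ppt (ext_vec (vec1 p q)) \<in> line_pts (ext_vec u1) (ext_vec v1)"
    using ext_line_ptsI ab pq by auto
  ultimately have "?L2 \<noteq> ?L" "?L2 \<noteq> ?L'" using skew by blast+
  moreover have "?L \<noteq> ?L'" using secants_distinct[OF det] .
  moreover have "line_on_surface (ext_coeffs c) ?L2" "line_on_surface (ext_coeffs c) ?L"
    "line_on_surface (ext_coeffs c) ?L'"
    using Kline_line_on_surface line2 on on' by blast+
  moreover have "ppt ?Y \<in> surf_pts (ext_coeffs c)"
    using Y(1) line2 by (auto simp: Kline_on_surface_def)
  ultimately have "eckardt (ext_coeffs c) (ppt ?Y)"
    unfolding eckardt_def using Y by blast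
  then show ?thesis
    unfolding Kline_has_K_eckardt_def using line_ptsI[OF ab', of u2 v2] by blast
qed

text \<open>The point e1 x' - e2 (x + y) on the secant through x' \<in> l1 and x + y lies in the
  span: it is a multiple of x' if e2 = 0, and otherwise a multiple of x'' + y with
  x'' = x - (e1/e2) x' \<in> l1, to which the easy case applies, because the secant x'' y cannot lie
  on S together with the secant x y (no Eckardt point on l2).\<close>
lemma secant_point_in_Span:
  fixes e1 e2 :: 'k
  assumes no_eck: "\<not> Kline_has_K_eckardt c u2 v2"
    and ab: "(a, b) \<noteq> (0, 0)" and ab': "(a', b') \<noteq> (0, 0)" and det: "a * q - b * p \<noteq> 0"
    and on: "Kline_on_surface c (vec1 a b) (vec2 a' b')" and e1: "e1 \<noteq> 0"
  defines "w \<equiv> lincomb e1 (vec1 p q) (- e2) (lincomb 1 (vec1 a b) 1 (vec2 a' b'))"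
  assumes onS: "evalF c w = 0"
  shows "ppt w \<in> Span"
proof (cases "e2 = 0")
  case True
  then have "w = (\<lambda>i. e1 * vec1 p q i)" by (simp add: w_def lincomb_def)
  moreover have "(p, q) \<noteq> (0, 0)" using det by auto
  ultimately show ?thesis using ppt_scale[OF e1] vec1_in_Span[of p q] by simp
next
  case False
  define m where "m = e1 / e2"
  have m: "m \<noteq> 0" using e1 False by (simp add: m_def)
  let ?a = "a - m * p" and ?b = "b - m * q"
  let ?w' = "lincomb 1 (vec1 ?a ?b) 1 (vec2 a' b')"
  have w: "w = (\<lambda>i. (- e2) * ?w' i)"
    using False by (simp add: w_def m_def lincomb_def fun_eq_iff field_simps)
  have "a * ?b - b * ?a = - m * (a * q - b * p)" by (simp add: algebra_simps)
  then have det': "a * ?b - b * ?a \<noteq> 0" using m det by simp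
  then have ab'': "(?a, ?b) \<noteq> (0, 0)" by auto
  have "evalF c ?w' = 0" using onS False evalF_scale[of c "- e2" ?w'] by (simp only: w) simp
  moreover have "\<not> Kline_on_surface c (vec1 ?a ?b) (vec2 a' b')"
    using two_secants_Eckardt[OF ab det' ab' on] no_eck by blast
  ultimately have "ppt ?w' \<in> Span" by (rule chord_step[OF ab'' ab'])
  then show ?thesis using ppt_scale[of "- e2" ?w'] False by (simp add: w)
qed

text \<open>Choose x' \<in> l1, not
  proportional to x, with polar(x', x + y) \<noteq> 0; then the line x', x + y is not on S and its
  third point lies in the span, so x + y does.\<close>
lemma tangent_step:
  assumes no_eck: "\<not> Kline_has_K_eckardt c u2 v2"
    and ab: "(a, b) \<noteq> (0, 0)" and ab': "(a', b') \<noteq> (0, 0)"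
    and on: "Kline_on_surface c (vec1 a b) (vec2 a' b')"
  defines "z \<equiv> lincomb 1 (vec1 a b) 1 (vec2 a' b')"
  assumes pol: "(polar c u1 z, polar c v1 z) \<noteq> (0, 0)"
  shows "ppt z \<in> Span"
proof -
  obtain p q where det: "a * q - b * p \<noteq> 0" and pol': "p * polar c u1 z + q * polar c v1 z \<noteq> 0"
    using independent_nonvanishing_point[OF ab pol] by blast
  have pq: "(p, q) \<noteq> (0, 0)" using det by auto
  define e1 where "e1 = polar c (vec1 p q) z"
  define e2 where "e2 = coeff (restr c (vec1 p q) z) 2"
  have e1: "e1 \<noteq> 0" using pol' by (simp add: e1_def polar_lincomb)
  have Fz: "evalF c z = 0" using Kline_evalF[OF on] by (simp add: z_def)
  have ind: "indep2 (vec1 p q) z" unfolding z_def by (rule indep_secant[OF pq ab'])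
  have off: "\<not> Kline_on_surface c (vec1 p q) z"
    using e1 by (simp add: Kline_on_surface_iff_restr[OF ind] restr_eq_0_iff e1_def)
  note chord = chord_third_point[OF ind evalF_vec1 Fz off, folded e1_def e2_def]
  have "ppt (lincomb e1 (vec1 p q) (- e2) z) \<in> Span"
    using secant_point_in_Span[OF no_eck ab ab' det on e1] surf_pts_evalF[OF chord(1)]
    by (simp add: z_def)
  moreover have "ppt z \<in> surf_pts c"
    using Fz independent ab by (intro surf_ptsI) (auto simp: z_def)
  ultimately show ?thesis
    using spanS.step[OF vec1_in_Span[OF pq]] third_pt_swap[OF chord(2)] by blast
qed

lemma polar_nonzero_on_a_line:
  assumes "smooth_cubic c" "z \<noteq> (\<lambda>_. 0)" "evalF c z = 0"
  shows "(polar c u1 z, polar c v1 z) \<noteq> (0, 0) \<or> (polar c u2 z, polar c v2 z) \<noteq> (0, 0)"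
proof -
  obtain w where w: "polar c w z \<noteq> 0" using smooth_polar_nonzero[OF assms] by blast
  obtain a b a' b' where "w = lincomb 1 (vec1 a b) 1 (vec2 a' b')" using decompose by blast
  then have "polar c w z = a * polar c u1 z + b * polar c v1 z + (a' * polar c u2 z + b' * polar c v2 z)"
    by (simp add: polar_lincomb)
  then show ?thesis using w by auto
qed

text \<open>Every K-point of S lies in the span: on l1 or l2 it is a generator; otherwise it is
  x + y with x \<in> l1, y \<in> l2, and the easy or the hard case applies, the latter with the
  roles of the lines exchanged if the tangent form vanishes on l1.\<close>
lemma surface_point_in_Span:
  assumes smooth: "smooth_cubic c"
    and no_eck1: "\<not> Kline_has_K_eckardt c u1 v1" and no_eck2: "\<not> Kline_has_K_eckardt c u2 v2"
    and P: "P \<in> surf_pts c"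
  shows "P \<in> Span"
proof -
  interpret swapped: skew_Klines c u2 v2 u1 v1
    using line1 line2 skew by unfold_locales (simp_all add: Int_commute)
  obtain z where z: "P = ppt z" "z \<noteq> (\<lambda>_. 0)" "evalF c z = 0"
    using P unfolding surf_pts_def by blast
  obtain a b a' b' where zdec: "z = lincomb 1 (vec1 a b) 1 (vec2 a' b')"
    using decompose by blast
  consider "(a', b') = (0, 0)" | "(a, b) = (0, 0)" | "(a, b) \<noteq> (0, 0)" "(a', b') \<noteq> (0, 0)"
    by blast
  then show ?thesis
  proof cases
    case 1
    then have "z = vec1 a b" using zdec by (simp add: lincomb_def)
    moreover from this have "(a, b) \<noteq> (0, 0)" using z(2) by (auto simp: lincomb_def)
    ultimately show ?thesis using z(1) vec1_in_Span by simp
  next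
    case 2
    then have "z = vec2 a' b'" using zdec by (simp add: lincomb_def)
    moreover from this have "(a', b') \<noteq> (0, 0)" using z(2) by (auto simp: lincomb_def)
    ultimately show ?thesis using z(1) vec2_in_Span by simp
  next
    case 3
    show ?thesis
    proof (cases "Kline_on_surface c (vec1 a b) (vec2 a' b')")
      case False
      then show ?thesis using chord_step[OF 3] z zdec by simp
    next
      case True
      from polar_nonzero_on_a_line[OF smooth z(2,3)] show ?thesis
      proof
        assume "(polar c u1 z, polar c v1 z) \<noteq> (0, 0)"
        then show ?thesis using tangent_step[OF no_eck2 3 True] z zdec by simp
      next
        assume pol: "(polar c u2 z, polar c v2 z) \<noteq> (0, 0)"
        have "z = lincomb 1 (vec2 a' b') 1 (vec1 a b)" using zdec by (simp add: lincomb_swap)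
        then have "P \<in> swapped.Span"
          using swapped.tangent_step[OF no_eck1 3(2,1)] True pol z(1)
          by (simp add: Kline_on_surface_swap)
        then show ?thesis by (simp add: Un_commute)
      qed
    qed
  qed
qed

end

theorem mainTheorem15:
  fixes c :: "(4 \<Rightarrow> nat) \<Rightarrow> 'k::{field, finite}"
    and u1 v1 u2 v2 :: "4 \<Rightarrow> 'k"
  assumes "CARD('k) = 3"
    and "smooth_cubic c"
    and "Kline_on_surface c u1 v1"
    and "Kline_on_surface c u2 v2"
    and "line_pts (ext_vec u1) (ext_vec v1) \<inter> line_pts (ext_vec u2) (ext_vec v2) = {}"
    and "\<not> Kline_has_K_eckardt c u1 v1"
    and "\<not> Kline_has_K_eckardt c u2 v2"
  shows "spanS c (line_pts u1 v1 \<union> line_pts u2 v2) = surf_pts c"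
proof -
  interpret skew_Klines c u1 v1 u2 v2
    using assms(3-5) by unfold_locales
  show ?thesis
    using Span_subset_surface surface_point_in_Span[OF assms(2,6,7)] by blast
qed

end
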